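(* Let $X_1, X_2, \dots$ be i.i.d. random variables with the exponential distribution with density $f(x)=\lambda e^{-\lambda x}$, $x\ge 0$, for some $\lambda>0$. For $n\ge 2$ let $F_n(t)=n^{-1}\sum_{i=1}^n \mathbf{1}\{X_i<t\}$ be the empirical distribution function of $X_1,\dots,X_n$, let $$H_n(t)=\binom{n}{2}^{-1}\sum_{1\le i<j\le n}\mathbf{1}\{2\min(X_i,X_j)<t\},\qquad t\ge 0,$$ and let $$I_n=\int_0^\infty \big(F_n(t)-H_n(t)\big)\,dF_n(t).$$ Then, as $n\to\infty$, $$\sqrt{n}\, I_n \xrightarrow{d} \mathcal{N}(0,9\Delta^2),\qquad \text{where } \Delta^2=\frac{11}{3780},$$ i.e. the limiting normal distribution has mean $0$ and variance $9\cdot\frac{11}{3780}=\frac{11}{420}$.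
   Context: $\Delta^2$ is the variance of the projection $\psi(s)=\frac13 e^{-s}-\frac1{18}-\frac49 e^{-3s}$ (taken under the standard exponential law) of the centered degree-3 kernel $\Psi(X,Y,Z)=\frac12-\frac13\big[\mathbf{1}\{2\min(X,Y)<Z\}+\mathbf{1}\{2\min(Y,Z)<X\}+\mathbf{1}\{2\min(X,Z)<Y\}\big]$, to whose $U$-statistic $I_n$ is asymptotically equivalent; the distribution of $I_n$ does not depend on $\lambda$. *)

theory Defs
  imports "HOL-Probability.Probability"
begin

definition emp_cdf :: "(nat \<Rightarrow> real) \<Rightarrow> nat \<Rightarrow> real \<Rightarrow> real" where
  "emp_cdf x n t = (\<Sum>i<n. if x i < t then 1 else 0) / real n"

definition H_stat :: "(nat \<Rightarrow> real) \<Rightarrow> nat \<Rightarrow> real \<Rightarrow> real" where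
  "H_stat x n t = (\<Sum>j<n. \<Sum>i<j. if 2 * min (x i) (x j) < t then 1 else 0) / real (n choose 2)"

definition emp_measure :: "(nat \<Rightarrow> real) \<Rightarrow> nat \<Rightarrow> real measure" where
  "emp_measure x n = measure_pmf (pmf_of_multiset (mset (map x [0..<n])))"

definition I_stat :: "(nat \<Rightarrow> real) \<Rightarrow> nat \<Rightarrow> real" where
  "I_stat x n = (LINT t:{0..}|emp_measure x n. emp_cdf x n t - H_stat x n t)"

end

theory Submission
  imports Defs "HOL-Real_Asymp.Real_Asymp"
begin

text \<open>For distinct nonnegative sample points, integrating against the empirical measure gives
  I_n = n^-1 sum_k (F_n(X_k) - H_n(X_k)). The ranks give sum_k F_n(X_k) = (n - 1)/2 exactly, while
  sum_k H_n(X_k) is a sum of the kernel h(x,y,z) = 1{2 min(x,y) < z} over index triples. The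
  Hoeffding decomposition h = 1/2 + a(x) + a(y) + b(z) + r(x,y,z), with centred projections
  satisfying 2a + b = -3 psi and a degenerate remainder r, yields almost surely
  sqrt n I_n = 3/sqrt n sum_k psi(X_k) - 1/(2 sqrt n) - c_n R_n with c_n ~ 2 n^(-5/2), where R_n
  sums r over all triples. Remainder terms of two triples are uncorrelated unless the triples share
  two indices or both repeat an index, so E R_n^2 = O(n^4) and the remainder vanishes in L^1. The
  central limit theorem for the linear part and a comparison of characteristic functions conclude.\<close>

section \<open>The exponential law\<close>

text \<open>Truncating at 0 changes nothing on the support of the exponential law but makes the
  function bounded by 1 everywhere.\<close>

definition exp_decay :: "real \<Rightarrow> real \<Rightarrow> real" where
  "exp_decay c y = exp (- c * max 0 y)"

lemma exp_decay_measurable[measurable (raw)]: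
  assumes [measurable]: "f \<in> borel_measurable N"
  shows "(\<lambda>x. exp_decay c (f x)) \<in> borel_measurable N"
  unfolding exp_decay_def by measurable

lemma exp_decay_bounds: "0 \<le> c \<Longrightarrow> 0 < exp_decay c y \<and> exp_decay c y \<le> 1"
  unfolding exp_decay_def by auto

lemma abs_exp_decay_le: "0 \<le> c \<Longrightarrow> \<bar>exp_decay c x\<bar> \<le> 1"
  using exp_decay_bounds[of c x] by auto

lemma exp_decay_mult: "exp_decay a y * exp_decay b y = exp_decay (a + b) y"
  unfolding exp_decay_def by (simp add: exp_add[symmetric] algebra_simps)

lemma integral_exponential_density: "0 < k \<Longrightarrow> integral\<^sup>L lborel (exponential_density k) = 1"
proof -
  assume k: "0 < k"
  interpret P: prob_space "density lborel (exponential_density k)"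
    by (rule prob_space_exponential_density[OF k])
  have "integral\<^sup>L (density lborel (exponential_density k)) (\<lambda>_. 1::real) = 1"
    using P.prob_space by simp
  moreover have "integral\<^sup>L (density lborel (exponential_density k)) (\<lambda>_. 1::real)
      = integral\<^sup>L lborel (exponential_density k)"
    using k by (subst integral_density) (auto simp: exponential_density_nonneg)
  ultimately show ?thesis by simp
qed

locale exponential_law =
  fixes l :: real
  assumes l_pos: "0 < l"
begin

definition mu :: "real measure" where
  "mu = density lborel (exponential_density l)"

lemma prob_space_mu: "prob_space mu"
  unfolding mu_def using prob_space_exponential_density[OF l_pos] .

sublocale MU: prob_space mu
  by (rule prob_space_mu)

lemma sets_mu[simp, measurable_cong]: "sets mu = sets borel"
  unfolding mu_def by simp

lemma space_mu[simp]: "space mu = UNIV"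
  unfolding mu_def by simp

lemma AE_mu_nonneg: "AE y in mu. 0 \<le> y"
  unfolding mu_def by (subst AE_density) (auto simp: exponential_density_def)

lemma AE_mu_neq: "AE y in mu. y \<noteq> a"
  unfolding mu_def by (subst AE_density) (auto intro: AE_mp[OF AE_lborel_singleton[of a]])

lemma integrable_mu_bounded:
  "(f::real\<Rightarrow>real) \<in> borel_measurable borel \<Longrightarrow> (\<And>x. \<bar>f x\<bar> \<le> B) \<Longrightarrow> integrable mu f"
  by (rule MU.integrable_const_bound[where B=B]) auto

lemma integrable_exp_decay[simp]: "0 \<le> c \<Longrightarrow> integrable mu (exp_decay c)"
  by (rule integrable_mu_bounded[where B=1]) (auto intro: abs_exp_decay_le)

lemma integral_mu_lborel:
  "(f::real\<Rightarrow>real) \<in> borel_measurable borel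
    \<Longrightarrow> integral\<^sup>L mu f = (\<integral>y. exponential_density l y * f y \<partial>lborel)"
  unfolding mu_def using l_pos by (subst integral_density) (auto simp: exponential_density_nonneg)

lemma integral_mu_exp_decay:
  assumes c: "0 \<le> c"
  shows "integral\<^sup>L mu (exp_decay c) = l / (l + c)"
proof -
  have "integral\<^sup>L mu (exp_decay c) = (\<integral>y. exponential_density l y * exp_decay c y \<partial>lborel)"
    by (rule integral_mu_lborel) simp
  also have "\<dots> = (\<integral>y. l / (l + c) * exponential_density (l + c) y \<partial>lborel)"
  proof (rule Bochner_Integration.integral_cong[OF refl])
    fix y
    have "exp (- y * l) * exp (- c * y) = exp (- y * (l + c))"
      by (simp add: exp_add[symmetric] algebra_simps)
    moreover have "l + c > 0" using l_pos c by simp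
    ultimately show "exponential_density l y * exp_decay c y = l / (l + c) * exponential_density (l + c) y"
      by (cases "y < 0") (simp_all add: exponential_density_def exp_decay_def max_def field_simps)
  qed
  also have "\<dots> = l / (l + c)"
    using l_pos c by (simp add: integral_exponential_density)
  finally show ?thesis .
qed

lemma integral_mu_tail:
  assumes a: "0 \<le> a" and f[measurable]: "(f::real\<Rightarrow>real) \<in> borel_measurable borel"
  shows "(\<integral>y. indicator {a..} y * f y \<partial>mu) = exp (- a * l) * (\<integral>u. f (a + u) \<partial>mu)"
proof -
  have "(\<integral>y. indicator {a..} y * f y \<partial>mu)
      = (\<integral>y. exponential_density l y * (indicator {a..} y * f y) \<partial>lborel)"
    by (rule integral_mu_lborel) simp
  also have "\<dots> = (\<integral>u. exponential_density l (a + 1 * u) * (indicator {a..} (a + 1 * u) * f (a + 1 * u)) \<partial>lborel)"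
    using lborel_integral_real_affine[of 1 "\<lambda>y. exponential_density l y * (indicator {a..} y * f y)" a]
    by simp
  also have "\<dots> = (\<integral>u. exp (- a * l) * (exponential_density l u * f (a + u)) \<partial>lborel)"
  proof (rule Bochner_Integration.integral_cong[OF refl])
    fix u
    have "exp (- (a + u) * l) = exp (- a * l) * exp (- u * l)"
      by (simp add: exp_add[symmetric] algebra_simps)
    then show "exponential_density l (a + 1 * u) * (indicator {a..} (a + 1 * u) * f (a + 1 * u))
        = exp (- a * l) * (exponential_density l u * f (a + u))"
      using a by (cases "u < 0") (simp_all add: exponential_density_def indicator_def)
  qed
  also have "\<dots> = exp (- a * l) * (\<integral>u. f (a + u) \<partial>mu)"
    by (simp add: integral_mu_lborel)
  finally show ?thesis .
qed

lemma integral_mu_indicator_ge: "0 \<le> a \<Longrightarrow> (\<integral>y. indicator {a..} y \<partial>mu) = exp (- a * l)"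
  using integral_mu_tail[of a "\<lambda>_. 1"] by (simp add: MU.prob_space[simplified])

lemma prob_mu_atLeast[simp]: "0 \<le> a \<Longrightarrow> MU.prob {a..} = exp (- a * l)"
  using integral_mu_indicator_ge[of a] by simp

lemma integral_mu_indicator_gt: "0 \<le> a \<Longrightarrow> (\<integral>y. indicator {a<..} y \<partial>mu) = exp (- a * l)"
proof -
  assume a: "0 \<le> a"
  have "AE y in mu. indicator {a<..} y = (indicator {a..} y :: real)"
    using AE_mu_neq[of a] by eventually_elim (auto simp: indicator_def)
  then have "(\<integral>y. indicator {a<..} y \<partial>mu) = (\<integral>y. (indicator {a..} y :: real) \<partial>mu)"
    by (rule integral_cong_AE[rotated 2]) auto
  then show ?thesis using integral_mu_indicator_ge[OF a] by simp
qed

lemma integral_mu_tail_exp_decay: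
  assumes a: "0 \<le> a" and c: "0 \<le> c"
  shows "(\<integral>y. indicator {a..} y * exp_decay c y \<partial>mu) = exp (- a * l) * exp (- c * a) * (l / (l + c))"
proof -
  have "(\<integral>y. indicator {a..} y * exp_decay c y \<partial>mu) = exp (- a * l) * (\<integral>u. exp_decay c (a + u) \<partial>mu)"
    by (rule integral_mu_tail[OF a]) simp
  also have "(\<integral>u. exp_decay c (a + u) \<partial>mu) = (\<integral>u. exp (- c * a) * exp_decay c u \<partial>mu)"
  proof (rule integral_cong_AE)
    show "AE u in mu. exp_decay c (a + u) = exp (- c * a) * exp_decay c u"
      using AE_mu_nonneg
      by eventually_elim (use a in \<open>auto simp: exp_decay_def max_def exp_add[symmetric] algebra_simps\<close>)
  qed auto
  also have "\<dots> = exp (- c * a) * (l / (l + c))"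
    using c by (simp add: integral_mu_exp_decay)
  finally show ?thesis by simp
qed

end

section \<open>Independent coordinates\<close>

lemma (in prob_space) borel_measurable_expectation_parametric:
  assumes G: "(\<lambda>p. G (fst p) (snd p)) \<in> borel_measurable (N \<Otimes>\<^sub>M T)"
    and V[measurable]: "V \<in> measurable M T"
  shows "(\<lambda>x. expectation (\<lambda>\<omega>. G x (V \<omega>) :: real)) \<in> borel_measurable N"
proof -
  interpret V: prob_space "distr M T V"
    by (rule prob_space_distr) simp
  have "(\<lambda>(x, v). G x v) \<in> borel_measurable (N \<Otimes>\<^sub>M distr M T V)"
    using G by (simp add: case_prod_beta')
  then have "(\<lambda>x. \<integral>v. G x v \<partial>distr M T V) \<in> borel_measurable N"
    by (rule V.borel_measurable_lebesgue_integral)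
  moreover have "expectation (\<lambda>\<omega>. G x (V \<omega>)) = (\<integral>v. G x v \<partial>distr M T V)" if "x \<in> space N" for x
  proof -
    have [measurable]: "G x \<in> borel_measurable T"
      using measurable_Pair2[OF G that] by simp
    show ?thesis by (rule integral_distr[symmetric]) auto
  qed
  ultimately show ?thesis
    by (subst measurable_cong) auto
qed

lemma (in prob_space) expectation_indep_var_integrate_fst:
  fixes G :: "'b \<Rightarrow> 'b \<Rightarrow> real"
  assumes ind: "indep_var S W T V"
    and G[measurable]: "(\<lambda>p. G (fst p) (snd p)) \<in> borel_measurable (S \<Otimes>\<^sub>M T)"
    and B: "\<And>x v. \<bar>G x v\<bar> \<le> B"
  shows "expectation (\<lambda>\<omega>. G (W \<omega>) (V \<omega>)) = (\<integral>w. expectation (\<lambda>\<omega>. G w (V \<omega>)) \<partial>distr M S W)"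
proof -
  have [measurable]: "W \<in> measurable M S" "V \<in> measurable M T"
    and joint: "distr M S W \<Otimes>\<^sub>M distr M T V = distr M (S \<Otimes>\<^sub>M T) (\<lambda>\<omega>. (W \<omega>, V \<omega>))"
    using ind unfolding indep_var_distribution_eq by auto
  interpret W: prob_space "distr M S W" by (rule prob_space_distr) simp
  interpret V: prob_space "distr M T V" by (rule prob_space_distr) simp
  interpret P: pair_prob_space "distr M S W" "distr M T V" ..
  have int: "integrable (distr M S W \<Otimes>\<^sub>M distr M T V) (\<lambda>p. G (fst p) (snd p))"
    by (rule P.integrable_const_bound[where B=B]) (auto simp: B)
  have "expectation (\<lambda>\<omega>. G (W \<omega>) (V \<omega>))
      = integral\<^sup>L (distr M (S \<Otimes>\<^sub>M T) (\<lambda>\<omega>. (W \<omega>, V \<omega>))) (\<lambda>p. G (fst p) (snd p))"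
    by (subst integral_distr) auto
  also have "\<dots> = (\<integral>w. (\<integral>v. G w v \<partial>distr M T V) \<partial>distr M S W)"
    using P.integral_fst'[OF int] by (simp add: joint)
  also have "\<dots> = (\<integral>w. expectation (\<lambda>\<omega>. G w (V \<omega>)) \<partial>distr M S W)"
  proof (rule Bochner_Integration.integral_cong[OF refl])
    fix w
    assume "w \<in> space (distr M S W)"
    then have [measurable]: "G w \<in> borel_measurable T"
      using measurable_Pair2[OF G] by simp
    show "(\<integral>v. G w v \<partial>distr M T V) = expectation (\<lambda>\<omega>. G w (V \<omega>))"
      by (rule integral_distr) auto
  qed
  finally show ?thesis .
qed

locale iid_exponential = prob_space M + exponential_law l
  for M :: "'a measure" and l :: real +
  fixes X :: "nat \<Rightarrow> 'a \<Rightarrow> real"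
  assumes indep: "indep_vars (\<lambda>i. borel) X UNIV"
    and distributed_X: "\<And>i. distributed M lborel (X i) (exponential_density l)"
begin

lemma X_measurable[measurable]: "X i \<in> borel_measurable M"
  using indep unfolding indep_vars_def2 by simp

lemma distr_X: "distr M borel (X i) = mu"
proof -
  have "distr M borel (X i) = distr M lborel (X i)"
    by (rule distr_cong) auto
  also have "\<dots> = mu"
    unfolding mu_def using distributed_distr_eq_density[OF distributed_X] .
  finally show ?thesis .
qed

lemma expectation_X:
  "(f::real\<Rightarrow>real) \<in> borel_measurable borel \<Longrightarrow> expectation (\<lambda>\<omega>. f (X i \<omega>)) = integral\<^sup>L mu f"
  unfolding distr_X[symmetric, of i] by (rule integral_distr[symmetric]) auto

lemma expectation_integrate_coordinate:
  fixes G :: "real \<Rightarrow> (nat \<Rightarrow> real) \<Rightarrow> real"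
  assumes A: "finite A" "m \<notin> A"
    and G[measurable]: "(\<lambda>p. G (fst p) (snd p)) \<in> borel_measurable (borel \<Otimes>\<^sub>M PiM A (\<lambda>_. borel))"
    and B: "\<And>x v. \<bar>G x v\<bar> \<le> B"
  shows "expectation (\<lambda>\<omega>. G (X m \<omega>) (restrict (\<lambda>i. X i \<omega>) A))
       = (\<integral>x. expectation (\<lambda>\<omega>. G x (restrict (\<lambda>i. X i \<omega>) A)) \<partial>mu)"
proof -
  define V where "V = (\<lambda>\<omega>. restrict (\<lambda>i. X i \<omega>) A)"
  have [measurable]: "V \<in> measurable M (PiM A (\<lambda>_. borel))"
    unfolding V_def by measurable
  have ind: "indep_var (PiM {m} (\<lambda>_. borel)) (\<lambda>\<omega>. restrict (\<lambda>i. X i \<omega>) {m}) (PiM A (\<lambda>_. borel)) V"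
    unfolding V_def using A by (intro indep_var_restrict[OF indep]) auto
  have Gm: "(\<lambda>p. G (fst p m) (snd p)) \<in> borel_measurable (PiM {m} (\<lambda>_. borel) \<Otimes>\<^sub>M PiM A (\<lambda>_. borel))"
    using measurable_comp[OF _ G, of "\<lambda>p. (fst p m, snd p)"] by (simp add: o_def)
  define h where "h x = expectation (\<lambda>\<omega>. G x (V \<omega>))" for x
  have [measurable]: "h \<in> borel_measurable borel"
    unfolding h_def by (rule borel_measurable_expectation_parametric[OF G]) simp
  have "expectation (\<lambda>\<omega>. G (X m \<omega>) (V \<omega>))
      = (\<integral>w. h (w m) \<partial>distr M (PiM {m} (\<lambda>_. borel)) (\<lambda>\<omega>. restrict (\<lambda>i. X i \<omega>) {m}))"
    using expectation_indep_var_integrate_fst[OF ind Gm B] by (simp add: h_def)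
  also have "\<dots> = expectation (\<lambda>\<omega>. h (X m \<omega>))"
    by (subst integral_distr) auto
  also have "\<dots> = integral\<^sup>L mu h"
    by (rule expectation_X) simp
  finally show ?thesis
    unfolding h_def V_def .
qed

lemma AE_X_nonneg: "AE \<omega> in M. \<forall>k. 0 \<le> X k \<omega>"
proof (subst AE_all_countable, intro allI)
  fix k
  have "AE x in distr M borel (X k). 0 \<le> x"
    unfolding distr_X by (rule AE_mu_nonneg)
  then show "AE \<omega> in M. 0 \<le> X k \<omega>"
    by (rule AE_distrD[rotated]) simp
qed

lemma AE_X_neq:
  assumes "i \<noteq> k"
  shows "AE \<omega> in M. X i \<omega> \<noteq> X k \<omega>"
proof -
  define G where "G x v = (if x = v k then 1 else 0 :: real)" for x and v :: "nat \<Rightarrow> real"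
  have Gm: "(\<lambda>p. G (fst p) (snd p)) \<in> borel_measurable (borel \<Otimes>\<^sub>M PiM {k} (\<lambda>_. borel))"
    unfolding G_def by measurable
  have ties_null: "expectation (\<lambda>\<omega>. G x (restrict (\<lambda>j. X j \<omega>) {k})) = 0" for x
  proof -
    have "expectation (\<lambda>\<omega>. G x (restrict (\<lambda>j. X j \<omega>) {k})) = expectation (\<lambda>\<omega>. indicator {x} (X k \<omega>) :: real)"
      by (rule arg_cong[where f=expectation]) (auto simp: G_def indicator_def)
    also have "\<dots> = (\<integral>y. indicator {x} y \<partial>mu)"
      by (rule expectation_X) simp
    also have "\<dots> = 0"
      using AE_mu_neq[of x] by (subst integral_eq_zero_AE) (auto simp: indicator_def)
    finally show ?thesis .
  qed
  have "expectation (\<lambda>\<omega>. G (X i \<omega>) (restrict (\<lambda>j. X j \<omega>) {k})) = 0"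
    using assms ties_null
    by (subst expectation_integrate_coordinate[OF _ _ Gm, where B=1]) (auto simp: G_def)
  moreover have int: "integrable M (\<lambda>\<omega>. G (X i \<omega>) (restrict (\<lambda>j. X j \<omega>) {k}))"
    by (rule integrable_const_bound[where B=1]) (auto simp: G_def)
  ultimately have "AE \<omega> in M. G (X i \<omega>) (restrict (\<lambda>j. X j \<omega>) {k}) = 0"
    using integral_nonneg_eq_0_iff_AE[OF int] by (auto simp: G_def)
  then show ?thesis
    by eventually_elim (auto simp: G_def split: if_splits)
qed

lemma AE_X_distinct: "AE \<omega> in M. \<forall>i k. i \<noteq> k \<longrightarrow> X i \<omega> \<noteq> X k \<omega>"
  by (auto simp: AE_all_countable intro: AE_X_neq)

end

section \<open>Hoeffding decomposition of the kernel\<close>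

definition kernel :: "real \<Rightarrow> real \<Rightarrow> real \<Rightarrow> real" where
  "kernel x y z = (if 2 * min x y < z then 1 else 0)"

text \<open>Under the exponential law, E h(x, Y, Z) = 1/3 + 2/3 exp(-3 l x) and
  E h(Y, Z, z) = 1 - exp(-l z); the two projections are these conditional means minus E h = 1/2.\<close>

definition proj_min :: "real \<Rightarrow> real \<Rightarrow> real" where
  "proj_min l x = - 1/6 + 2/3 * exp_decay (3 * l) x"

definition proj_thr :: "real \<Rightarrow> real \<Rightarrow> real" where
  "proj_thr l z = 1/2 - exp_decay l z"

definition kernel_rem :: "real \<Rightarrow> real \<Rightarrow> real \<Rightarrow> real \<Rightarrow> real" where
  "kernel_rem l x y z = kernel x y z - 1/2 - proj_min l x - proj_min l y - proj_thr l z"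

definition psi :: "real \<Rightarrow> real \<Rightarrow> real" where
  "psi l s = 1/3 * exp_decay l s - 1/18 - 4/9 * exp_decay (3 * l) s"

lemma kernel_measurable[measurable (raw)]:
  assumes [measurable]: "f \<in> borel_measurable N" "g \<in> borel_measurable N" "h \<in> borel_measurable N"
  shows "(\<lambda>x. kernel (f x) (g x) (h x)) \<in> borel_measurable N"
  unfolding kernel_def by measurable

lemma kernel_rem_measurable[measurable (raw)]:
  assumes [measurable]: "f \<in> borel_measurable N" "g \<in> borel_measurable N" "h \<in> borel_measurable N"
  shows "(\<lambda>x. kernel_rem l (f x) (g x) (h x)) \<in> borel_measurable N"
  unfolding kernel_rem_def proj_min_def proj_thr_def by measurable

lemma psi_measurable[measurable]: "psi l \<in> borel_measurable borel"
  unfolding psi_def by measurable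

lemma kernel_decomp: "kernel x y z = kernel_rem l x y z + 1/2 + proj_min l x + proj_min l y + proj_thr l z"
  unfolding kernel_rem_def by simp

lemma kernel_rem_swap: "kernel_rem l x y z = kernel_rem l y x z"
  unfolding kernel_rem_def kernel_def by (simp add: min.commute)

lemma proj_min_proj_thr_psi: "2 * proj_min l x + proj_thr l x = - 3 * psi l x"
  unfolding proj_min_def proj_thr_def psi_def by simp

lemma abs_kernel_rem_le:
  assumes "0 \<le> l"
  shows "\<bar>kernel_rem l x y z\<bar> \<le> 3"
  using exp_decay_bounds[of "3 * l" x] exp_decay_bounds[of "3 * l" y] exp_decay_bounds[of l z] assms
  unfolding kernel_rem_def kernel_def proj_min_def proj_thr_def by auto

lemma abs_psi_le:
  assumes "0 \<le> l"
  shows "\<bar>psi l x\<bar> \<le> 1"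
  using exp_decay_bounds[of "3 * l" x] exp_decay_bounds[of l x] assms
  unfolding psi_def by auto

context exponential_law
begin

lemma integrable_proj_min[simp]: "integrable mu (proj_min l)"
  unfolding proj_min_def using l_pos by simp

lemma integrable_proj_thr[simp]: "integrable mu (proj_thr l)"
  unfolding proj_thr_def using l_pos by simp

lemma integral_proj_min: "integral\<^sup>L mu (proj_min l) = 0"
  unfolding proj_min_def using l_pos by (simp add: integral_mu_exp_decay MU.prob_space[simplified])

lemma integral_proj_thr: "integral\<^sup>L mu (proj_thr l) = 0"
  unfolding proj_thr_def using l_pos
  by (simp add: integral_diff integral_mu_exp_decay MU.prob_space[simplified])

lemma integral_psi: "integral\<^sup>L mu (psi l) = 0"
  unfolding psi_def using l_pos
  by (simp add: integral_diff integral_mu_exp_decay MU.prob_space[simplified])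

lemma integral_psi_sq: "(\<integral>y. (psi l y)^2 \<partial>mu) = 11/3780"
proof -
  have "(psi l y)^2 = 1/9 * exp_decay (2*l) y + 1/324 + 16/81 * exp_decay (6*l) y
      - 1/27 * exp_decay l y - 8/27 * exp_decay (4*l) y + 4/81 * exp_decay (3*l) y" for y
    unfolding psi_def power2_eq_square by (simp add: algebra_simps exp_decay_mult)
  then have "(\<integral>y. (psi l y)^2 \<partial>mu)
      = 1/9 * integral\<^sup>L mu (exp_decay (2*l)) + 1/324 + 16/81 * integral\<^sup>L mu (exp_decay (6*l))
        - 1/27 * integral\<^sup>L mu (exp_decay l) - 8/27 * integral\<^sup>L mu (exp_decay (4*l))
        + 4/81 * integral\<^sup>L mu (exp_decay (3*l))"
    using l_pos by (simp add: integral_diff integral_add MU.prob_space[simplified])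
  also have "\<dots> = 11/3780"
    using l_pos by (simp add: integral_mu_exp_decay field_simps)
  finally show ?thesis .
qed

lemma integral_kernel_thr: "(\<integral>z. kernel x y z \<partial>mu) = exp_decay (2*l) (min x y)"
proof (cases "0 \<le> min x y")
  case True
  have "(\<integral>z. kernel x y z \<partial>mu) = (\<integral>z. indicator {2 * min x y<..} z \<partial>mu)"
    by (rule Bochner_Integration.integral_cong) (auto simp: kernel_def indicator_def)
  also have "\<dots> = exp (- (2 * min x y) * l)"
    using True by (intro integral_mu_indicator_gt) simp
  finally show ?thesis
    using True by (simp add: exp_decay_def max_def algebra_simps)
next
  case False
  have "AE z in mu. kernel x y z = 1"
    using AE_mu_nonneg by eventually_elim (use False in \<open>auto simp: kernel_def\<close>)
  then have "(\<integral>z. kernel x y z \<partial>mu) = (\<integral>z. 1 \<partial>mu)"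
    by (rule integral_cong_AE[rotated 2]) auto
  moreover have "max 0 (min x y) = 0"
    using False unfolding max_def by argo
  ultimately show ?thesis
    by (simp add: exp_decay_def MU.prob_space[simplified])
qed

lemma integrable_kernel_thr[simp]: "integrable mu (\<lambda>z. kernel x y z)"
  by (rule integrable_mu_bounded[where B=1]) (auto simp: kernel_def)

lemma integral_exp_decay_min:
  assumes x: "0 \<le> x"
  shows "(\<integral>y. exp_decay (2*l) (min x y) \<partial>mu) = 1/3 + 2/3 * exp_decay (3*l) x"
proof -
  have split: "exp_decay (2*l) (min x y)
      = exp_decay (2*l) y + exp_decay (2*l) x * indicator {x..} y - indicator {x..} y * exp_decay (2*l) y" for y
    by (auto simp: indicator_def min_def)
  have "integrable mu (\<lambda>y. exp_decay (2*l) x * indicator {x..} y :: real)"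
    by (rule integrable_mu_bounded[where B="\<bar>exp_decay (2*l) x\<bar>"]) (auto simp: indicator_def)
  moreover have "integrable mu (\<lambda>y. indicator {x..} y * exp_decay (2*l) y)"
    by (rule integrable_mu_bounded[where B=1]) (use l_pos in \<open>auto simp: indicator_def intro: abs_exp_decay_le\<close>)
  ultimately have "(\<integral>y. exp_decay (2*l) (min x y) \<partial>mu)
      = integral\<^sup>L mu (exp_decay (2*l)) + exp_decay (2*l) x * (\<integral>y. indicator {x..} y \<partial>mu)
        - (\<integral>y. indicator {x..} y * exp_decay (2*l) y \<partial>mu)"
    using l_pos by (simp add: split integral_diff integral_add)
  also have "\<dots> = l / (l + 2*l) + exp_decay (2*l) x * exp (- x * l)
      - exp (- x * l) * exp (- (2*l) * x) * (l / (l + 2*l))"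
    using l_pos x by (simp add: integral_mu_exp_decay integral_mu_indicator_ge integral_mu_tail_exp_decay)
  also have "\<dots> = 1/3 + 2/3 * exp_decay (3*l) x"
  proof -
    have "exp_decay (2*l) x * exp (- x * l) = exp_decay (3*l) x"
      "exp (- x * l) * exp (- (2*l) * x) = exp_decay (3*l) x"
      using x by (auto simp: exp_decay_def max_def exp_add[symmetric] algebra_simps)
    then show ?thesis using l_pos by (simp add: field_simps)
  qed
  finally show ?thesis .
qed

text \<open>The remainder is degenerate: integrating out any two of its arguments leaves zero (the first
  two arguments are interchangeable, so two cases suffice).\<close>

lemma integral2_kernel_rem_first:
  assumes x: "0 \<le> x"
  shows "(\<integral>y. (\<integral>z. kernel_rem l x y z \<partial>mu) \<partial>mu) = 0"
proof -
  have "(\<integral>z. kernel_rem l x y z \<partial>mu) = exp_decay (2*l) (min x y) + (- 1/2 - proj_min l x) - proj_min l y" for y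
    unfolding kernel_rem_def
    by (simp add: integral_diff integral_kernel_thr integral_proj_thr MU.prob_space[simplified])
  moreover have "integrable mu (\<lambda>y. exp_decay (2*l) (min x y))"
    by (rule integrable_mu_bounded[where B=1]) (use l_pos in \<open>auto intro: abs_exp_decay_le\<close>)
  ultimately have "(\<integral>y. (\<integral>z. kernel_rem l x y z \<partial>mu) \<partial>mu)
      = (\<integral>y. exp_decay (2*l) (min x y) \<partial>mu) + (- 1/2 - proj_min l x) - integral\<^sup>L mu (proj_min l)"
    by (simp add: integral_diff integral_add MU.prob_space[simplified])
  also have "\<dots> = 0"
    using x by (simp add: integral_exp_decay_min integral_proj_min proj_min_def)
  finally show ?thesis .
qed

lemma integral2_kernel_rem_last:
  assumes x: "0 \<le> x"
  shows "(\<integral>y. (\<integral>z. kernel_rem l y z x \<partial>mu) \<partial>mu) = 0"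
proof -
  have ind: "integrable mu (\<lambda>z. c * indicator {x/2..} z :: real)" for c
    by (rule integrable_mu_bounded[where B="\<bar>c\<bar>"]) (auto simp: indicator_def)
  have "kernel y z x = 1 - indicator {x/2..} y * indicator {x/2..} z" for y z
    by (auto simp: kernel_def indicator_def min_def)
  then have "(\<integral>z. kernel_rem l y z x \<partial>mu)
      = 1/2 - proj_thr l x - indicator {x/2..} y * exp (- (x/2) * l) - proj_min l y" for y
    unfolding kernel_rem_def using x ind
    by (simp add: integral_diff integral_proj_min integral_mu_indicator_ge MU.prob_space[simplified])
  moreover have "exp (- (x/2) * l) * exp (- (x/2) * l) = exp (- x * l)"
    by (simp add: exp_add[symmetric] algebra_simps)
  ultimately show ?thesis
    using x ind[of "exp (- (x/2) * l)"]
    by (simp add: integral_diff mult.commute integral_proj_min integral_mu_indicator_ge proj_thr_def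
        exp_decay_def MU.prob_space[simplified])
qed

end

section \<open>Orthogonality of the remainder terms\<close>

lemma measurable_comp_pair:
  assumes "(\<lambda>p. \<phi> (fst p) (snd p)) \<in> borel_measurable (borel \<Otimes>\<^sub>M borel)"
    and [measurable]: "f \<in> borel_measurable N" "g \<in> borel_measurable N"
  shows "(\<lambda>x. \<phi> (f x) (g x) :: real) \<in> borel_measurable N"
  using measurable_comp[OF _ assms(1), of "\<lambda>x. (f x, g x)"] by (simp add: o_def)

context iid_exponential
begin

lemma expectation_degenerate_times:
  fixes \<phi> :: "real \<Rightarrow> real \<Rightarrow> real" and \<Gamma> :: "(nat \<Rightarrow> real) \<Rightarrow> real"
  assumes A: "finite A" "b \<noteq> c" "b \<notin> A" "c \<notin> A"
    and \<phi>m: "(\<lambda>p. \<phi> (fst p) (snd p)) \<in> borel_measurable (borel \<Otimes>\<^sub>M borel)"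
    and \<Gamma>m[measurable]: "\<Gamma> \<in> borel_measurable (PiM A (\<lambda>_. borel))"
    and \<phi>b: "\<And>y z. \<bar>\<phi> y z\<bar> \<le> C" and \<Gamma>b: "\<And>v. \<bar>\<Gamma> v\<bar> \<le> D"
    and degenerate: "(\<integral>y. (\<integral>z. \<phi> y z \<partial>mu) \<partial>mu) = 0"
  shows "expectation (\<lambda>\<omega>. \<phi> (X b \<omega>) (X c \<omega>) * \<Gamma> (restrict (\<lambda>i. X i \<omega>) A)) = 0"
proof -
  define A1 where "A1 = insert c A"
  have A1: "finite A1" "b \<notin> A1" "A \<subseteq> A1" "c \<in> A1"
    using A by (auto simp: A1_def)
  have bnd: "\<bar>\<phi> y z * \<Gamma> v\<bar> \<le> C * D" for y z v
    unfolding abs_mult by (rule mult_mono) (auto intro: \<phi>b \<Gamma>b order.trans[OF abs_ge_zero \<phi>b])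
  have "(\<lambda>p. \<phi> (fst p) (snd p c) * \<Gamma> (restrict (snd p) A)) \<in> borel_measurable (borel \<Otimes>\<^sub>M PiM A1 (\<lambda>_. borel))"
  proof (rule borel_measurable_times)
    have "(\<lambda>p. restrict (snd p) A) \<in> measurable (borel \<Otimes>\<^sub>M PiM A1 (\<lambda>_. borel)) (PiM A (\<lambda>_. borel))"
      using measurable_restrict_subset[OF A1(3), of "\<lambda>_. borel"] by measurable
    then show "(\<lambda>p. \<Gamma> (restrict (snd p) A)) \<in> borel_measurable (borel \<Otimes>\<^sub>M PiM A1 (\<lambda>_. borel))"
      by measurable
    show "(\<lambda>p. \<phi> (fst p) (snd p c)) \<in> borel_measurable (borel \<Otimes>\<^sub>M PiM A1 (\<lambda>_. borel))"
      by (rule measurable_comp_pair[OF \<phi>m]) (use A1(4) in measurable)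
  qed
  then have "expectation (\<lambda>\<omega>. \<phi> (X b \<omega>) (X c \<omega>) * \<Gamma> (restrict (\<lambda>i. X i \<omega>) A))
      = (\<integral>y. expectation (\<lambda>\<omega>. \<phi> y (X c \<omega>) * \<Gamma> (restrict (\<lambda>i. X i \<omega>) A)) \<partial>mu)"
    using expectation_integrate_coordinate[OF A1(1,2), where B="C * D"
        and G="\<lambda>y v. \<phi> y (v c) * \<Gamma> (restrict v A)"] A1 bnd
    by (simp add: Int_absorb1)
  also have "\<dots> = (\<integral>y. (\<integral>z. \<phi> y z \<partial>mu) * expectation (\<lambda>\<omega>. \<Gamma> (restrict (\<lambda>i. X i \<omega>) A)) \<partial>mu)"
  proof (rule Bochner_Integration.integral_cong[OF refl])
    fix y
    have "(\<lambda>p. \<phi> y (fst p) * \<Gamma> (snd p)) \<in> borel_measurable (borel \<Otimes>\<^sub>M PiM A (\<lambda>_. borel))"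
      using measurable_comp_pair[OF \<phi>m, of "\<lambda>_. y"] by measurable
    then show "expectation (\<lambda>\<omega>. \<phi> y (X c \<omega>) * \<Gamma> (restrict (\<lambda>i. X i \<omega>) A))
        = (\<integral>z. \<phi> y z \<partial>mu) * expectation (\<lambda>\<omega>. \<Gamma> (restrict (\<lambda>i. X i \<omega>) A))"
      using expectation_integrate_coordinate[OF A(1,4), where B="C * D"
          and G="\<lambda>z v. \<phi> y z * \<Gamma> v"] bnd
      by simp
  qed
  also have "\<dots> = 0"
    by (simp add: degenerate)
  finally show ?thesis .
qed

end

definition tri_set :: "nat \<times> nat \<times> nat \<Rightarrow> nat set" where
  "tri_set t = (case t of (i, j, k) \<Rightarrow> {i, j, k})"

definition tri_distinct :: "nat \<times> nat \<times> nat \<Rightarrow> bool" where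
  "tri_distinct t = (case t of (i, j, k) \<Rightarrow> i \<noteq> j \<and> k \<noteq> i \<and> k \<noteq> j)"

definition share_two :: "nat \<times> nat \<times> nat \<Rightarrow> nat \<times> nat \<times> nat \<Rightarrow> bool" where
  "share_two t t' = (\<exists>u v. u \<noteq> v \<and> u \<in> tri_set t \<and> v \<in> tri_set t \<and> u \<in> tri_set t' \<and> v \<in> tri_set t')"

definition correlated :: "nat \<times> nat \<times> nat \<Rightarrow> nat \<times> nat \<times> nat \<Rightarrow> bool" where
  "correlated t t' = (share_two t t' \<or> (\<not> tri_distinct t \<and> \<not> tri_distinct t'))"

definition rem_term :: "real \<Rightarrow> nat \<times> nat \<times> nat \<Rightarrow> (nat \<Rightarrow> real) \<Rightarrow> real" where
  "rem_term l t v = (case t of (i, j, k) \<Rightarrow> kernel_rem l (v i) (v j) (v k))"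

lemma finite_tri_set[simp]: "finite (tri_set t)"
  by (cases t) (simp add: tri_set_def)

lemma card_tri_set_le: "card (tri_set t) \<le> 3"
  by (cases t) (auto simp: tri_set_def card_insert_if)

lemma share_two_sym: "share_two t t' = share_two t' t"
  unfolding share_two_def by blast

lemma not_share_two_common_index:
  assumes "\<not> share_two t t'"
  shows "\<exists>m \<in> tri_set t. tri_set t \<inter> tri_set t' \<subseteq> {m}"
proof (cases "tri_set t \<inter> tri_set t' = {}")
  case True
  then show ?thesis by (auto simp: tri_set_def split: prod.splits)
next
  case False
  then obtain u where "u \<in> tri_set t \<inter> tri_set t'" by blast
  with assms show ?thesis unfolding share_two_def by blast
qed

lemma rem_term_cong: "(\<And>a. a \<in> tri_set t \<Longrightarrow> v a = w a) \<Longrightarrow> rem_term l t v = rem_term l t w"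
  by (cases t) (auto simp: rem_term_def tri_set_def)

lemma abs_rem_term_le: "0 \<le> l \<Longrightarrow> \<bar>rem_term l t v\<bar> \<le> 3"
  by (cases t) (auto simp: rem_term_def intro: abs_kernel_rem_le)

lemma abs_rem_term_mult_le:
  assumes "0 \<le> l"
  shows "\<bar>rem_term l t v * rem_term l t' w\<bar> \<le> 9"
proof -
  have "\<bar>rem_term l t v\<bar> * \<bar>rem_term l t' w\<bar> \<le> 3 * 3"
    using assms by (intro mult_mono abs_rem_term_le) auto
  then show ?thesis by (simp add: abs_mult)
qed

lemma rem_term_measurable:
  assumes "\<And>a. a \<in> tri_set t \<Longrightarrow> (\<lambda>p. F p a) \<in> borel_measurable N"
  shows "(\<lambda>p. rem_term l t (F p)) \<in> borel_measurable N"
proof (cases t)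
  case (fields i j k)
  have [measurable]: "(\<lambda>p. F p i) \<in> borel_measurable N" "(\<lambda>p. F p j) \<in> borel_measurable N"
    "(\<lambda>p. F p k) \<in> borel_measurable N"
    using assms by (auto simp: fields tri_set_def)
  show ?thesis unfolding fields rem_term_def by simp measurable
qed

lemma measurable_fun_upd_component_pair:
  assumes "a \<in> insert m A"
  shows "(\<lambda>p. ((snd p)(m := fst p)) a) \<in> borel_measurable (borel \<Otimes>\<^sub>M PiM A (\<lambda>_. borel))"
  using assms by (cases "a = m") (simp_all, measurable)

lemma measurable_fun_upd_component:
  assumes "a \<in> insert m A"
  shows "(\<lambda>w. (w(m := x)) a) \<in> borel_measurable (PiM A (\<lambda>_. borel))"
  using assms by (cases "a = m") simp_all

context iid_exponential
begin

lemma expectation_rem_term_fix_one: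
  assumes t: "tri_distinct t" and m: "m \<in> tri_set t" and x: "0 \<le> x"
    and A: "finite A" "A \<inter> tri_set t \<subseteq> {m}"
    and \<Gamma>m: "\<Gamma> \<in> borel_measurable (PiM A (\<lambda>_. borel))" and \<Gamma>b: "\<And>v. \<bar>\<Gamma> v\<bar> \<le> B"
  shows "expectation (\<lambda>\<omega>. rem_term l t ((\<lambda>i. X i \<omega>)(m := x)) * \<Gamma> (restrict (\<lambda>i. X i \<omega>) A)) = 0"
proof -
  obtain i j k where t_eq: "t = (i, j, k)" by (cases t)
  have dist: "i \<noteq> j" "k \<noteq> i" "k \<noteq> j"
    using t by (auto simp: t_eq tri_distinct_def)
  have degenerate: "expectation (\<lambda>\<omega>. \<phi> (X b \<omega>) (X c \<omega>) * \<Gamma> (restrict (\<lambda>i. X i \<omega>) A)) = 0"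
    if "b \<noteq> c" "b \<in> tri_set t" "c \<in> tri_set t" "b \<noteq> m" "c \<noteq> m"
      and "(\<lambda>p. \<phi> (fst p) (snd p)) \<in> borel_measurable (borel \<Otimes>\<^sub>M borel)"
      and "(\<integral>y. (\<integral>z. \<phi> y z \<partial>mu) \<partial>mu) = 0" and "\<And>y z. \<bar>\<phi> y z\<bar> \<le> 3"
    for b c \<phi>
    using that A
    by (intro expectation_degenerate_times[OF A(1) _ _ _ _ \<Gamma>m _ \<Gamma>b, where C=3]) auto
  have [measurable]: "(\<lambda>p. kernel_rem l x (fst p) (snd p)) \<in> borel_measurable (borel \<Otimes>\<^sub>M borel)"
    "(\<lambda>p. kernel_rem l (fst p) x (snd p)) \<in> borel_measurable (borel \<Otimes>\<^sub>M borel)"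
    "(\<lambda>p. kernel_rem l (fst p) (snd p) x) \<in> borel_measurable (borel \<Otimes>\<^sub>M borel)"
    by measurable
  have "m = i \<or> m = j \<or> m = k"
    using m by (auto simp: t_eq tri_set_def)
  then show ?thesis
  proof (elim disjE)
    assume "m = i"
    then show ?thesis
      using degenerate[of j k "\<lambda>y z. kernel_rem l x y z"] integral2_kernel_rem_first[OF x] dist l_pos
      by (simp add: t_eq rem_term_def tri_set_def abs_kernel_rem_le)
  next
    assume "m = j"
    then show ?thesis
      using degenerate[of i k "\<lambda>y z. kernel_rem l y x z"] integral2_kernel_rem_first[OF x] dist l_pos
      by (simp add: t_eq rem_term_def tri_set_def abs_kernel_rem_le kernel_rem_swap[of l _ x])
  next
    assume "m = k"
    then show ?thesis
      using degenerate[of i j "\<lambda>y z. kernel_rem l y z x"] integral2_kernel_rem_last[OF x] dist l_pos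
      by (simp add: t_eq rem_term_def tri_set_def abs_kernel_rem_le)
  qed
qed

text \<open>If the distinct triple t meets t' in at most one index m, conditioning on X m leaves the
  other two arguments of the remainder free, and degeneracy kills the product.\<close>

lemma expectation_rem_term_product:
  assumes t: "tri_distinct t" and not_share: "\<not> share_two t t'"
  shows "expectation (\<lambda>\<omega>. rem_term l t (\<lambda>i. X i \<omega>) * rem_term l t' (\<lambda>i. X i \<omega>)) = 0"
proof -
  obtain m where m: "m \<in> tri_set t" "tri_set t \<inter> tri_set t' \<subseteq> {m}"
    using not_share_two_common_index[OF not_share] by blast
  define A where "A = (tri_set t \<union> tri_set t') - {m}"
  define A' where "A' = tri_set t' - {m}"
  define G where "G x v = rem_term l t (v(m := x)) * rem_term l t' (v(m := x))" for x and v :: "nat \<Rightarrow> real"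
  have "(\<lambda>p. G (fst p) (snd p)) \<in> borel_measurable (borel \<Otimes>\<^sub>M PiM A (\<lambda>_. borel))"
    unfolding G_def
    by (intro borel_measurable_times rem_term_measurable measurable_fun_upd_component_pair)
      (auto simp: A_def)
  then have "expectation (\<lambda>\<omega>. rem_term l t (\<lambda>i. X i \<omega>) * rem_term l t' (\<lambda>i. X i \<omega>))
      = (\<integral>x. expectation (\<lambda>\<omega>. G x (restrict (\<lambda>i. X i \<omega>) A)) \<partial>mu)"
    using l_pos abs_rem_term_mult_le
    by (subst expectation_integrate_coordinate[where B=9, symmetric])
      (auto simp: A_def G_def intro!: arg_cong[where f=expectation] arg_cong2[where f="(*)"] rem_term_cong)
  also have "\<dots> = 0"
  proof (rule integral_eq_zero_AE)
    show "AE x in mu. expectation (\<lambda>\<omega>. G x (restrict (\<lambda>i. X i \<omega>) A)) = 0"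
      using AE_mu_nonneg
    proof eventually_elim
      fix x :: real
      assume x: "0 \<le> x"
      define \<Gamma> where "\<Gamma> w = rem_term l t' (w(m := x))" for w :: "nat \<Rightarrow> real"
      have \<Gamma>m: "\<Gamma> \<in> borel_measurable (PiM A' (\<lambda>_. borel))"
        unfolding \<Gamma>_def by (intro rem_term_measurable measurable_fun_upd_component) (auto simp: A'_def)
      have "G x (restrict (\<lambda>i. X i \<omega>) A)
          = rem_term l t ((\<lambda>i. X i \<omega>)(m := x)) * \<Gamma> (restrict (\<lambda>i. X i \<omega>) A')" for \<omega>
        unfolding G_def \<Gamma>_def
        by (intro arg_cong2[where f="(*)"] rem_term_cong) (auto simp: A_def A'_def)
      moreover have "expectation (\<lambda>\<omega>. rem_term l t ((\<lambda>i. X i \<omega>)(m := x)) * \<Gamma> (restrict (\<lambda>i. X i \<omega>) A')) = 0"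
        using m l_pos abs_rem_term_le
        by (intro expectation_rem_term_fix_one[OF t m(1) x _ _ \<Gamma>m, where B=3]) (auto simp: A'_def \<Gamma>_def)
      ultimately show "expectation (\<lambda>\<omega>. G x (restrict (\<lambda>i. X i \<omega>) A)) = 0"
        by simp
    qed
  qed
  finally show ?thesis .
qed

lemma rem_term_X_measurable[measurable]: "(\<lambda>\<omega>. rem_term l t (\<lambda>i. X i \<omega>)) \<in> borel_measurable M"
  by (rule rem_term_measurable) simp

lemma integrable_rem_term_product:
  "integrable M (\<lambda>\<omega>. rem_term l t (\<lambda>i. X i \<omega>) * rem_term l t' (\<lambda>i. X i \<omega>))"
  using l_pos abs_rem_term_mult_le by (intro integrable_const_bound[where B=9]) auto

lemma expectation_rem_term_product_le:
  "expectation (\<lambda>\<omega>. rem_term l t (\<lambda>i. X i \<omega>) * rem_term l t' (\<lambda>i. X i \<omega>))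
    \<le> (if correlated t t' then 9 else 0)"
proof (cases "correlated t t'")
  case True
  have "rem_term l t (\<lambda>i. X i \<omega>) * rem_term l t' (\<lambda>i. X i \<omega>) \<le> 9" for \<omega>
    using l_pos abs_rem_term_mult_le[of l t _ t'] by (simp add: abs_le_iff)
  with True show ?thesis
    by (auto intro!: integral_le_const integrable_rem_term_product)
next
  case False
  then consider "tri_distinct t" "\<not> share_two t t'" | "tri_distinct t'" "\<not> share_two t' t"
    by (auto simp: correlated_def share_two_sym)
  then show ?thesis
    using expectation_rem_term_product[of t t'] expectation_rem_term_product[of t' t]
    by cases (simp_all add: mult.commute)
qed

lemma expectation_sq_sum_rem_term_le:
  assumes T: "finite T"
  shows "expectation (\<lambda>\<omega>. (\<Sum>t\<in>T. rem_term l t (\<lambda>i. X i \<omega>))^2)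
    \<le> 9 * card {p \<in> T \<times> T. correlated (fst p) (snd p)}"
proof -
  have "expectation (\<lambda>\<omega>. (\<Sum>t\<in>T. rem_term l t (\<lambda>i. X i \<omega>))^2)
      = (\<Sum>t\<in>T. \<Sum>t'\<in>T. expectation (\<lambda>\<omega>. rem_term l t (\<lambda>i. X i \<omega>) * rem_term l t' (\<lambda>i. X i \<omega>)))"
    by (simp add: power2_eq_square sum_product integrable_rem_term_product)
  also have "\<dots> \<le> (\<Sum>t\<in>T. \<Sum>t'\<in>T. if correlated t t' then 9 else 0)"
    by (intro sum_mono expectation_rem_term_product_le)
  also have "\<dots> = (\<Sum>p\<in>T \<times> T. if correlated (fst p) (snd p) then 9 else 0)"
    by (simp add: sum.cartesian_product case_prod_beta)
  also have "\<dots> = (\<Sum>p\<in>{p \<in> T \<times> T. correlated (fst p) (snd p)}. 9)"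
    using T by (subst sum.inter_filter) auto
  finally show ?thesis by simp
qed

end

section \<open>Counting correlated pairs of triples\<close>

definition triples :: "nat \<Rightarrow> (nat \<times> nat \<times> nat) set" where
  "triples n = {(i, j, k). i < j \<and> j < n \<and> k < n}"

lemma triples_subset: "triples n \<subseteq> {..<n} \<times> {..<n} \<times> {..<n}"
  by (auto simp: triples_def)

lemma finite_triples[simp]: "finite (triples n)"
  by (rule finite_subset[OF triples_subset]) auto

lemma card_triples_le: "card (triples n) \<le> n^3"
  using card_mono[OF _ triples_subset, of n] by (simp add: card_cartesian_product power3_eq_cube)

lemma card_share_two_le: "card {t' \<in> triples n. share_two t t'} \<le> 27 * n"
proof -
  let ?S = "tri_set t"
  have "{t' \<in> triples n. share_two t t'}
      \<subseteq> (?S \<times> ?S \<times> {..<n}) \<union> (?S \<times> {..<n} \<times> ?S) \<union> ({..<n} \<times> ?S \<times> ?S)"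
    by (auto simp: triples_def share_two_def tri_set_def)
  then have "card {t' \<in> triples n. share_two t t'}
      \<le> card ((?S \<times> ?S \<times> {..<n}) \<union> (?S \<times> {..<n} \<times> ?S) \<union> ({..<n} \<times> ?S \<times> ?S))"
    by (intro card_mono) auto
  also have "\<dots> \<le> card (?S \<times> ?S \<times> {..<n}) + card (?S \<times> {..<n} \<times> ?S) + card ({..<n} \<times> ?S \<times> ?S)"
    by (intro order.trans[OF card_Un_le] add_mono card_Un_le order.refl)
  also have "\<dots> = 3 * (card ?S * card ?S * n)"
    by (simp add: card_cartesian_product)
  also have "\<dots> \<le> 3 * (3 * 3 * n)"
    using card_tri_set_le[of t] by (intro mult_le_mono) auto
  finally show ?thesis by simp
qed

lemma card_not_tri_distinct_le: "card {t \<in> triples n. \<not> tri_distinct t} \<le> 2 * n^2"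
proof -
  let ?D = "{..<n} \<times> {..<n}"
  have "{t \<in> triples n. \<not> tri_distinct t} \<subseteq> (\<lambda>(i, j). (i, j, i)) ` ?D \<union> (\<lambda>(i, j). (i, j, j)) ` ?D"
    by (force simp: triples_def tri_distinct_def)
  then have "card {t \<in> triples n. \<not> tri_distinct t}
      \<le> card ((\<lambda>(i, j). (i, j, i)) ` ?D \<union> (\<lambda>(i, j). (i, j, j)) ` ?D)"
    by (intro card_mono) auto
  also have "\<dots> \<le> card ((\<lambda>(i, j). (i, j, i)) ` ?D) + card ((\<lambda>(i, j). (i, j, j)) ` ?D)"
    by (rule card_Un_le)
  also have "\<dots> \<le> card ?D + card ?D"
    by (intro add_mono card_image_le) auto
  finally show ?thesis by (simp add: card_cartesian_product power2_eq_square)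
qed

lemma card_correlated_le: "card {p \<in> triples n \<times> triples n. correlated (fst p) (snd p)} \<le> 31 * n^4"
proof -
  let ?T = "triples n"
  let ?D = "{t \<in> triples n. \<not> tri_distinct t}"
  have "{p \<in> ?T \<times> ?T. correlated (fst p) (snd p)} \<subseteq> Sigma ?T (\<lambda>t. {t' \<in> ?T. share_two t t'}) \<union> ?D \<times> ?D"
    by (auto simp: correlated_def)
  then have "card {p \<in> ?T \<times> ?T. correlated (fst p) (snd p)}
      \<le> card (Sigma ?T (\<lambda>t. {t' \<in> ?T. share_two t t'}) \<union> ?D \<times> ?D)"
    by (intro card_mono) auto
  also have "\<dots> \<le> card (Sigma ?T (\<lambda>t. {t' \<in> ?T. share_two t t'})) + card (?D \<times> ?D)"
    by (rule card_Un_le)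
  also have "card (Sigma ?T (\<lambda>t. {t' \<in> ?T. share_two t t'})) = (\<Sum>t\<in>?T. card {t' \<in> ?T. share_two t t'})"
    by (rule card_SigmaI) auto
  also have "\<dots> \<le> card ?T * (27 * n)"
    using sum_mono[of ?T _ "\<lambda>_. 27 * n", OF card_share_two_le] by simp
  also have "\<dots> \<le> n^3 * (27 * n)"
    using card_triples_le by (intro mult_le_mono) auto
  also have "card (?D \<times> ?D) \<le> (2 * n^2) * (2 * n^2)"
    unfolding card_cartesian_product using card_not_tri_distinct_le by (intro mult_le_mono) auto
  finally show ?thesis by (simp add: power_def algebra_simps)
qed

section \<open>The statistic as a linear part plus a remainder\<close>

lemma sum_set_count_list: "(\<Sum>a\<in>set xs. real (count_list xs a) * g a) = sum_list (map g xs)"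
proof (induction xs)
  case Nil
  then show ?case by simp
next
  case (Cons x xs)
  have "(\<Sum>a\<in>insert x (set xs). real (count_list xs a) * g a) = (\<Sum>a\<in>set xs. real (count_list xs a) * g a)"
    by (cases "x \<in> set xs") (simp_all add: insert_absorb count_list_0_iff)
  moreover have "real (count_list (x # xs) a) * g a = real (count_list xs a) * g a + (if x = a then g a else 0)" for a
    by (simp add: algebra_simps)
  ultimately show ?case
    using Cons by (simp add: sum.distrib)
qed

lemma I_stat_eq_sum:
  assumes n: "0 < n"
  shows "I_stat x n = (\<Sum>k<n. indicator {0..} (x k) * (emp_cdf x n (x k) - H_stat x n (x k))) / n"
proof -
  define xs where "xs = map x [0..<n]"
  define g where "g t = indicator {0..} t * (emp_cdf x n t - H_stat x n t)" for t
  have "xs \<noteq> []" and sz: "size (mset xs) = n"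
    using n by (simp_all add: xs_def)
  then have ne: "mset xs \<noteq> {#}" by simp
  have "I_stat x n = (\<integral>t. g t \<partial>measure_pmf (pmf_of_multiset (mset xs)))"
    unfolding I_stat_def emp_measure_def set_lebesgue_integral_def g_def xs_def by simp
  also have "\<dots> = (\<Sum>a\<in>set xs. g a * pmf (pmf_of_multiset (mset xs)) a)"
    by (rule integral_measure_pmf_real) (use ne in auto)
  also have "\<dots> = (\<Sum>a\<in>set xs. count_list xs a * g a) / n"
    using ne sz by (simp add: count_mset sum_divide_distrib mult.commute)
  also have "\<dots> = (\<Sum>k<n. g (x k)) / n"
    unfolding sum_set_count_list xs_def
    by (simp add: sum_set_upt_conv_sum_list_nat[symmetric] o_def atLeast0LessThan)
  finally show ?thesis by (simp add: g_def)
qed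

lemma real_choose_two: "real (n choose 2) = real n * (real n - 1) / 2"
proof (induction n)
  case 0
  then show ?case by simp
next
  case (Suc n)
  have "Suc n choose 2 = n + (n choose 2)"
    using binomial_Suc_Suc[of n 1] by (simp add: numeral_2_eq_2)
  then show ?case using Suc by (simp add: field_simps)
qed

lemma sum_lessThan_real: "(\<Sum>j<n. real j) = real n * (real n - 1) / 2"
  by (induction n) (auto simp: field_simps)

lemma sum_pairs_add: "(\<Sum>j<n. \<Sum>i<j. f i + f j) = (real n - 1) * (\<Sum>m<n. (f m :: real))"
  by (induction n) (simp_all add: sum.distrib algebra_simps)

lemma sum_triples: "(\<Sum>k<n. \<Sum>j<n. \<Sum>i<j. g (i, j, k)) = (\<Sum>t\<in>triples n. g t)"
proof -
  have "(\<Sum>k<n. \<Sum>j<n. \<Sum>i<j. g (i, j, k))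
      = (\<Sum>q\<in>(SIGMA k:{..<n}. (SIGMA j:{..<n}. {..<j})). g (snd (snd q), fst (snd q), fst q))"
    by (simp add: sum.Sigma split_beta)
  also have "\<dots> = (\<Sum>t\<in>triples n. g t)"
    by (rule sum.reindex_bij_witness[where i="\<lambda>t. (snd (snd t), fst (snd t), fst t)"
          and j="\<lambda>q. (snd (snd q), fst (snd q), fst q)"]) (auto simp: triples_def)
  finally show ?thesis .
qed

text \<open>Each unordered pair of distinct sample points contributes exactly one strict inequality.\<close>

lemma sum_emp_cdf_sample:
  fixes x :: "nat \<Rightarrow> real"
  assumes "0 < n" and dist: "\<And>i k. i < n \<Longrightarrow> k < n \<Longrightarrow> i \<noteq> k \<Longrightarrow> x i \<noteq> x k"
  shows "(\<Sum>k<n. emp_cdf x n (x k)) = (real n - 1) / 2"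
proof -
  define Q where "Q = (\<Sum>k<n. \<Sum>i<n. if x i < x k then 1 else 0 :: real)"
  have "Q + Q = (\<Sum>k<n. \<Sum>i<n. (if x i < x k then 1 else 0) + (if x k < x i then 1 else 0 :: real))"
    unfolding Q_def by (subst (2) sum.swap) (simp add: sum.distrib)
  also have "\<dots> = (\<Sum>k<n. \<Sum>i\<in>{..<n} - {k}. 1)"
  proof (rule sum.cong[OF refl])
    fix k assume k: "k \<in> {..<n}"
    have "(if x i < x k then 1 else 0) + (if x k < x i then 1 else 0 :: real) = (if i = k then 0 else 1)"
      if "i \<in> {..<n}" for i
      using dist[of i k] k that by (cases "i = k") auto
    then show "(\<Sum>i<n. (if x i < x k then 1 else 0) + (if x k < x i then 1 else 0 :: real))
        = (\<Sum>i\<in>{..<n} - {k}. 1)"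
      using k by (simp add: sum.If_cases Diff_eq Int_commute)
  qed
  also have "\<dots> = real n * (real n - 1)"
    by (simp add: card_Diff_singleton)
  finally have "Q = real n * (real n - 1) / 2" by simp
  then show ?thesis
    using assms(1) unfolding Q_def emp_cdf_def by (simp add: sum_divide_distrib[symmetric])
qed

lemma sum_kernel_decomp:
  "(\<Sum>k<n. \<Sum>j<n. \<Sum>i<j. kernel (x i) (x j) (x k))
   = (\<Sum>t\<in>triples n. rem_term l t x) + real n * (real n - 1) * (\<Sum>m<n. proj_min l (x m))
     + real (n choose 2) * (real n / 2 + (\<Sum>k<n. proj_thr l (x k)))"
proof -
  have "(\<Sum>k<n. \<Sum>j<n. \<Sum>i<j. kernel (x i) (x j) (x k))
      = (\<Sum>k<n. \<Sum>j<n. \<Sum>i<j. kernel_rem l (x i) (x j) (x k))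
        + (\<Sum>k<n. \<Sum>j<n. \<Sum>i<j. proj_min l (x i) + proj_min l (x j))
        + (\<Sum>k<n. \<Sum>j<n. \<Sum>i<j. 1/2 + proj_thr l (x k))"
    by (simp add: kernel_decomp[of _ _ _ l] sum.distrib algebra_simps)
  also have "(\<Sum>k<n. \<Sum>j<n. \<Sum>i<j. kernel_rem l (x i) (x j) (x k)) = (\<Sum>t\<in>triples n. rem_term l t x)"
    using sum_triples[where n=n and g="\<lambda>t. rem_term l t x"] by (simp add: rem_term_def)
  also have "(\<Sum>k<n. \<Sum>j<n. \<Sum>i<j. proj_min l (x i) + proj_min l (x j))
      = real n * ((real n - 1) * (\<Sum>m<n. proj_min l (x m)))"
    by (simp add: sum_pairs_add)
  also have "(\<Sum>k<n. \<Sum>j<n. \<Sum>i<j. 1/2 + proj_thr l (x k)) = (\<Sum>j<n. real j) * (\<Sum>k<n. 1/2 + proj_thr l (x k))"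
    by (simp add: sum_distrib_left sum_distrib_right)
  also have "\<dots> = real (n choose 2) * (real n / 2 + (\<Sum>k<n. proj_thr l (x k)))"
    by (simp add: sum_lessThan_real real_choose_two sum.distrib)
  finally show ?thesis by (simp add: algebra_simps)
qed

lemma scaled_I_stat_decomp:
  fixes x :: "nat \<Rightarrow> real"
  assumes n: "2 \<le> n" and nonneg: "\<And>k. k < n \<Longrightarrow> 0 \<le> x k"
    and dist: "\<And>i k. i < n \<Longrightarrow> k < n \<Longrightarrow> i \<noteq> k \<Longrightarrow> x i \<noteq> x k"
  shows "sqrt n * I_stat x n = - 1 / (2 * sqrt n) + 3 / sqrt n * (\<Sum>k<n. psi l (x k))
          - sqrt n / (n * real (n choose 2)) * (\<Sum>t\<in>triples n. rem_term l t x)"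
proof -
  define C where "C = real (n choose 2)"
  define R where "R = (\<Sum>t\<in>triples n. rem_term l t x)"
  define Sa where "Sa = (\<Sum>m<n. proj_min l (x m))"
  define Sb where "Sb = (\<Sum>k<n. proj_thr l (x k))"
  define Sp where "Sp = (\<Sum>k<n. psi l (x k))"
  have C: "C = real n * (real n - 1) / 2" and npos: "real n \<ge> 2"
    using n by (simp_all add: C_def real_choose_two)
  have "C > 0"
    unfolding C using npos by (intro divide_pos_pos mult_pos_pos) auto
  have "real n * (real n - 1) * Sa / C = 2 * Sa"
    using \<open>C > 0\<close> n unfolding C by simp
  moreover have "(\<Sum>k<n. H_stat x n (x k)) = (R + real n * (real n - 1) * Sa + C * (real n / 2 + Sb)) / C"
    unfolding H_stat_def R_def Sa_def Sb_def C_def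
    by (simp add: sum_divide_distrib[symmetric] sum_kernel_decomp[where l=l, symmetric] kernel_def)
  ultimately have H: "(\<Sum>k<n. H_stat x n (x k)) = R / C + 2 * Sa + real n / 2 + Sb"
    using \<open>C > 0\<close> by (simp add: add_divide_distrib)
  have "real n * I_stat x n = (real n - 1) / 2 - (R / C + 2 * Sa + real n / 2 + Sb)"
    using I_stat_eq_sum[of n x] n nonneg sum_emp_cdf_sample[of n x] dist
    by (simp add: indicator_def sum_subtractf H)
  moreover have "2 * Sa + Sb = - 3 * Sp"
    unfolding Sa_def Sb_def Sp_def
    by (simp add: sum_distrib_left sum.distrib[symmetric] proj_min_proj_thr_psi)
  ultimately have "real n * I_stat x n = - 1/2 - R / C + 3 * Sp"
    by argo
  then have I: "I_stat x n = (- 1/2 - R / C + 3 * Sp) / n"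
    using npos by (simp add: field_simps)
  have "s * ((- 1/2 - R / C + 3 * Sp) / (s * s)) = - 1 / (2 * s) + 3 / s * Sp - s / (s * s * C) * R"
    if "s > 0" for s
    using that \<open>C > 0\<close> by (simp add: field_simps)
  from this[of "sqrt n"] show ?thesis
    unfolding I C_def[symmetric] R_def[symmetric] Sp_def[symmetric]
    using npos by simp
qed

section \<open>Passage to the limit\<close>

lemma char_normal_density_scale:
  assumes s: "0 < \<sigma>"
  shows "char (density lborel (normal_density 0 \<sigma>)) t = char std_normal_distribution (\<sigma> * t)"
proof -
  interpret S: prob_space std_normal_distribution
    using prob_space_normal_density by simp
  have "distributed std_normal_distribution lborel (\<lambda>x. x) (normal_density 0 1)"
    unfolding distributed_def by (simp add: distr_id2)
  from S.normal_density_affine[OF this, of \<sigma> 0] s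
  have "distributed std_normal_distribution lborel (\<lambda>x. \<sigma> * x) (normal_density 0 \<sigma>)"
    by simp
  then have "density lborel (normal_density 0 \<sigma>) = distr std_normal_distribution lborel (\<lambda>x. \<sigma> * x)"
    by (rule distributed_distr_eq_density[symmetric])
  then show ?thesis
    unfolding char_def by (simp add: integral_distr ac_simps)
qed

lemma norm_iexp_diff_le: "cmod (iexp a - iexp b) \<le> \<bar>a - b\<bar>"
proof -
  have "iexp a - iexp b = iexp b * (iexp (a - b) - 1)"
    by (simp add: algebra_simps exp_add[symmetric])
  then have "cmod (iexp a - iexp b) = cmod (iexp (a - b) - 1)"
    by (simp add: norm_mult)
  also have "\<dots> \<le> \<bar>a - b\<bar>"
    using iexp_approx1[of "a - b" 0] by simp
  finally show ?thesis .
qed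

context prob_space
begin

lemma char_distr: "f \<in> borel_measurable M \<Longrightarrow> char (distr M borel f) t = (CLINT \<omega>|M. iexp (t * f \<omega>))"
  unfolding char_def by (rule integral_distr) auto

lemma norm_char_distr_diff_le:
  assumes [measurable]: "Z \<in> borel_measurable M" "Y \<in> borel_measurable M"
    and g: "integrable M g" and close: "AE \<omega> in M. \<bar>Z \<omega> - Y \<omega>\<bar> \<le> g \<omega>"
  shows "cmod (char (distr M borel Z) t - char (distr M borel Y) t) \<le> \<bar>t\<bar> * expectation g"
proof -
  have iZ: "integrable M (\<lambda>\<omega>. iexp (t * Z \<omega>))" and iY: "integrable M (\<lambda>\<omega>. iexp (t * Y \<omega>))"
    by (rule integrable_iexp; simp)+
  have "cmod (char (distr M borel Z) t - char (distr M borel Y) t)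
      = cmod (CLINT \<omega>|M. iexp (t * Z \<omega>) - iexp (t * Y \<omega>))"
    using char_distr[of Z t] char_distr[of Y t] Bochner_Integration.integral_diff[OF iZ iY] by simp
  also have "\<dots> \<le> expectation (\<lambda>\<omega>. cmod (iexp (t * Z \<omega>) - iexp (t * Y \<omega>)))"
    by (rule integral_norm_bound)
  also have "\<dots> \<le> expectation (\<lambda>\<omega>. \<bar>t\<bar> * g \<omega>)"
  proof (rule integral_mono_AE)
    show "AE \<omega> in M. cmod (iexp (t * Z \<omega>) - iexp (t * Y \<omega>)) \<le> \<bar>t\<bar> * g \<omega>"
      using close
    proof eventually_elim
      fix \<omega> assume "\<bar>Z \<omega> - Y \<omega>\<bar> \<le> g \<omega>"
      then have "\<bar>t * Z \<omega> - t * Y \<omega>\<bar> \<le> \<bar>t\<bar> * g \<omega>"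
        by (simp add: abs_mult mult_left_mono flip: right_diff_distrib)
      then show "cmod (iexp (t * Z \<omega>) - iexp (t * Y \<omega>)) \<le> \<bar>t\<bar> * g \<omega>"
        using norm_iexp_diff_le order_trans by blast
    qed
  qed (use iZ iY g in auto)
  finally show ?thesis by simp
qed

lemma expectation_abs_le_sqrt_sq:
  assumes [measurable]: "W \<in> borel_measurable M" and B: "\<And>\<omega>. \<bar>W \<omega>\<bar> \<le> B"
  shows "expectation (\<lambda>\<omega>. \<bar>W \<omega>\<bar>) \<le> sqrt (expectation (\<lambda>\<omega>. (W \<omega>)^2))"
proof -
  have "integrable M (\<lambda>\<omega>. \<bar>W \<omega>\<bar>)"
    by (rule integrable_const_bound[where B=B]) (auto simp: B)
  moreover have "integrable M (\<lambda>\<omega>. (\<bar>W \<omega>\<bar>)^2)"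
    using B order.trans[OF abs_ge_zero B]
    by (intro integrable_const_bound[where B="B^2"]) (auto simp: power2_le_iff_abs_le)
  ultimately have "variance (\<lambda>\<omega>. \<bar>W \<omega>\<bar>) = expectation (\<lambda>\<omega>. (\<bar>W \<omega>\<bar>)^2) - (expectation (\<lambda>\<omega>. \<bar>W \<omega>\<bar>))^2"
    by (rule variance_eq)
  moreover have "0 \<le> variance (\<lambda>\<omega>. \<bar>W \<omega>\<bar>)"
    by simp
  ultimately have "(expectation (\<lambda>\<omega>. \<bar>W \<omega>\<bar>))^2 \<le> expectation (\<lambda>\<omega>. (W \<omega>)^2)"
    by simp
  then show ?thesis
    by (simp add: real_le_rsqrt)
qed

end

context iid_exponential
begin

definition Zn :: "nat \<Rightarrow> 'a \<Rightarrow> real" where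
  "Zn n \<omega> = sqrt (real n) * I_stat (\<lambda>i. X i \<omega>) n"

definition Ln :: "nat \<Rightarrow> 'a \<Rightarrow> real" where
  "Ln n \<omega> = 3 / sqrt (real n) * (\<Sum>k<n. psi l (X k \<omega>))"

definition Rn :: "nat \<Rightarrow> 'a \<Rightarrow> real" where
  "Rn n \<omega> = (\<Sum>t\<in>triples n. rem_term l t (\<lambda>i. X i \<omega>))"

definition rem_coeff :: "nat \<Rightarrow> real" where
  "rem_coeff n = sqrt (real n) / (real n * real (n choose 2))"

lemma Zn_measurable[measurable]: "Zn n \<in> borel_measurable M"
proof (cases "n = 0")
  case True
  then have "Zn n = (\<lambda>_. 0)"
    by (simp add: Zn_def fun_eq_iff)
  then show ?thesis by simp
next
  case False
  then have "Zn n = (\<lambda>\<omega>. sqrt (real n) * ((\<Sum>k<n. indicator {0..} (X k \<omega>)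
      * (emp_cdf (\<lambda>i. X i \<omega>) n (X k \<omega>) - H_stat (\<lambda>i. X i \<omega>) n (X k \<omega>))) / n))"
    by (simp add: Zn_def I_stat_eq_sum fun_eq_iff)
  also have "\<dots> \<in> borel_measurable M"
    unfolding emp_cdf_def H_stat_def by measurable
  finally show ?thesis .
qed

lemma Ln_measurable[measurable]: "Ln n \<in> borel_measurable M"
  unfolding Ln_def by measurable

lemma Rn_measurable[measurable]: "Rn n \<in> borel_measurable M"
  unfolding Rn_def by measurable

lemma AE_Zn_decomp:
  assumes n: "2 \<le> n"
  shows "AE \<omega> in M. Zn n \<omega> = Ln n \<omega> - 1 / (2 * sqrt (real n)) - rem_coeff n * Rn n \<omega>"
  using AE_X_nonneg AE_X_distinct
proof eventually_elim
  fix \<omega> assume "\<forall>k. 0 \<le> X k \<omega>" "\<forall>i k. i \<noteq> k \<longrightarrow> X i \<omega> \<noteq> X k \<omega>"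
  then show "Zn n \<omega> = Ln n \<omega> - 1 / (2 * sqrt (real n)) - rem_coeff n * Rn n \<omega>"
    using scaled_I_stat_decomp[OF n, of "\<lambda>i. X i \<omega>" l] by (simp add: Zn_def Ln_def Rn_def rem_coeff_def)
qed

lemma abs_Rn_le: "\<bar>Rn n \<omega>\<bar> \<le> 3 * card (triples n)"
proof -
  have "\<bar>Rn n \<omega>\<bar> \<le> (\<Sum>t\<in>triples n. \<bar>rem_term l t (\<lambda>i. X i \<omega>)\<bar>)"
    unfolding Rn_def by (rule sum_abs)
  also have "\<dots> \<le> (\<Sum>t\<in>triples n. 3)"
    using l_pos by (intro sum_mono abs_rem_term_le) auto
  finally show ?thesis by simp
qed

lemma integrable_abs_Rn: "integrable M (\<lambda>\<omega>. \<bar>Rn n \<omega>\<bar>)"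
  using abs_Rn_le[of n] by (intro integrable_const_bound[where B="3 * card (triples n)"]) auto

lemma expectation_abs_Rn_le: "expectation (\<lambda>\<omega>. \<bar>Rn n \<omega>\<bar>) \<le> sqrt 279 * (real n)^2"
proof -
  have "expectation (\<lambda>\<omega>. \<bar>Rn n \<omega>\<bar>) \<le> sqrt (expectation (\<lambda>\<omega>. (Rn n \<omega>)^2))"
    by (rule expectation_abs_le_sqrt_sq[OF _ abs_Rn_le]) simp
  also have "expectation (\<lambda>\<omega>. (Rn n \<omega>)^2) \<le> 9 * card {p \<in> triples n \<times> triples n. correlated (fst p) (snd p)}"
    unfolding Rn_def by (rule expectation_sq_sum_rem_term_le) simp
  also have "\<dots> \<le> 279 * ((real n)^2)^2"
    using card_correlated_le[of n] by (simp del: of_nat_power add: of_nat_power[symmetric] power_mult[symmetric])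
  also have "sqrt \<dots> = sqrt 279 * (real n)^2"
    by (subst real_sqrt_mult, subst real_sqrt_abs) simp
  finally show ?thesis by simp
qed

lemma rem_bound_tendsto_0:
  "(\<lambda>n. 1 / (2 * sqrt (real n)) + rem_coeff n * (sqrt 279 * (real n)^2)) \<longlonglongrightarrow> 0"
proof -
  have "(\<lambda>n. 1 / (2 * sqrt (real n))
      + sqrt (real n) / (real n * (real n * (real n - 1) / 2)) * (sqrt 279 * (real n)^2)) \<longlonglongrightarrow> 0"
    by real_asymp
  then show ?thesis by (simp add: rem_coeff_def real_choose_two)
qed

lemma norm_char_Zn_Ln_le:
  assumes n: "2 \<le> n"
  shows "cmod (char (distr M borel (Zn n)) t - char (distr M borel (Ln n)) t)
    \<le> \<bar>t\<bar> * (1 / (2 * sqrt (real n)) + rem_coeff n * (sqrt 279 * (real n)^2))"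
proof -
  define g where "g \<omega> = 1 / (2 * sqrt (real n)) + rem_coeff n * \<bar>Rn n \<omega>\<bar>" for \<omega>
  have coeff: "0 \<le> rem_coeff n"
    by (simp add: rem_coeff_def)
  have "cmod (char (distr M borel (Zn n)) t - char (distr M borel (Ln n)) t) \<le> \<bar>t\<bar> * expectation g"
  proof (rule norm_char_distr_diff_le)
    show "integrable M g"
      unfolding g_def using integrable_abs_Rn by simp
    show "AE \<omega> in M. \<bar>Zn n \<omega> - Ln n \<omega>\<bar> \<le> g \<omega>"
      using AE_Zn_decomp[OF n]
    proof eventually_elim
      fix \<omega> assume "Zn n \<omega> = Ln n \<omega> - 1 / (2 * sqrt (real n)) - rem_coeff n * Rn n \<omega>"
      then have "\<bar>Zn n \<omega> - Ln n \<omega>\<bar> = \<bar>1 / (2 * sqrt (real n)) + rem_coeff n * Rn n \<omega>\<bar>"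
        by (simp add: abs_minus_commute)
      also have "\<dots> \<le> g \<omega>"
        unfolding g_def by (rule order.trans[OF abs_triangle_ineq]) (simp add: abs_mult coeff)
      finally show "\<bar>Zn n \<omega> - Ln n \<omega>\<bar> \<le> g \<omega>" .
    qed
  qed simp_all
  also have "expectation g = 1 / (2 * sqrt (real n)) + rem_coeff n * expectation (\<lambda>\<omega>. \<bar>Rn n \<omega>\<bar>)"
    unfolding g_def using integrable_abs_Rn prob_space by simp
  also have "\<bar>t\<bar> * \<dots> \<le> \<bar>t\<bar> * (1 / (2 * sqrt (real n)) + rem_coeff n * (sqrt 279 * (real n)^2))"
    using expectation_abs_Rn_le[of n] coeff by (intro mult_left_mono add_left_mono) auto
  finally show ?thesis .
qed

definition limit_sd :: real where
  "limit_sd = sqrt (9 * (11 / 3780))"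

lemma char_Ln_tendsto: "(\<lambda>n. char (distr M borel (Ln n)) t) \<longlonglongrightarrow> char std_normal_distribution (limit_sd * t)"
proof -
  define \<xi> where "\<xi> k \<omega> = 3 * psi l (X k \<omega>)" for k \<omega>
  have [measurable]: "\<xi> k \<in> borel_measurable M" for k
    unfolding \<xi>_def by measurable
  have sd: "0 < limit_sd" "limit_sd\<^sup>2 = 9 * (11 / 3780)"
    unfolding limit_sd_def by simp_all
  have indep_\<xi>: "indep_vars (\<lambda>i. borel) \<xi> UNIV"
    unfolding \<xi>_def by (rule indep_vars_compose2[OF indep, where Y="\<lambda>i x. 3 * psi l x"]) simp
  have mean: "expectation (\<xi> n) = 0" for n
    unfolding \<xi>_def by (simp add: expectation_X integral_psi)
  have sq_integrable: "integrable M (\<lambda>x. (\<xi> n x)\<^sup>2)" for n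
    using abs_psi_le[of l "X n _"] l_pos
    by (intro integrable_const_bound[where B=9])
      (auto simp: \<xi>_def power_mult_distrib abs_square_le_1)
  have var: "variance (\<xi> n) = limit_sd\<^sup>2" for n
  proof -
    have "(\<lambda>y. (psi l y)^2) \<in> borel_measurable borel"
      by measurable
    from expectation_X[OF this] have "expectation (\<lambda>\<omega>. (psi l (X n \<omega>))^2) = 11 / 3780"
      by (simp add: integral_psi_sq)
    then show ?thesis
      using mean[of n] by (simp add: \<xi>_def sd(2) power_mult_distrib)
  qed
  have law: "distr M borel (\<xi> n) = distr mu borel (\<lambda>x. 3 * psi l x)" for n
    unfolding \<xi>_def distr_X[symmetric, of n] by (subst distr_distr) (auto simp: o_def)
  have "weak_conv_m (\<lambda>n. distr M borel (\<lambda>x. (\<Sum>i<n. \<xi> i x) / sqrt (real n * limit_sd\<^sup>2))) std_normal_distribution"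
    by (rule central_limit_theorem_zero_mean[OF indep_\<xi> mean sd(1) sq_integrable var law])
  then have "(\<lambda>n. char (distr M borel (\<lambda>x. (\<Sum>i<n. \<xi> i x) / sqrt (real n * limit_sd\<^sup>2))) (limit_sd * t))
      \<longlonglongrightarrow> char std_normal_distribution (limit_sd * t)"
    by (intro levy_continuity1[OF _ real_dist_normal_dist] real_distribution_distr) simp_all
  moreover have "char (distr M borel (\<lambda>x. (\<Sum>i<n. \<xi> i x) / sqrt (real n * limit_sd\<^sup>2))) (limit_sd * t)
      = char (distr M borel (Ln n)) t" for n
  proof -
    have "limit_sd * t * ((\<Sum>i<n. \<xi> i \<omega>) / sqrt (real n * limit_sd\<^sup>2)) = t * Ln n \<omega>" for \<omega>
      using sd(1) by (simp add: Ln_def \<xi>_def real_sqrt_mult sum_distrib_left[symmetric] field_simps)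
    then show ?thesis
      by (simp add: char_distr)
  qed
  ultimately show ?thesis
    by simp
qed

lemma char_Zn_tendsto: "(\<lambda>n. char (distr M borel (Zn n)) t) \<longlonglongrightarrow> char std_normal_distribution (limit_sd * t)"
proof -
  have "(\<lambda>n. char (distr M borel (Zn n)) t - char (distr M borel (Ln n)) t) \<longlonglongrightarrow> 0"
  proof (rule Lim_null_comparison)
    show "\<forall>\<^sub>F n in sequentially. norm (char (distr M borel (Zn n)) t - char (distr M borel (Ln n)) t)
        \<le> \<bar>t\<bar> * (1 / (2 * sqrt (real n)) + rem_coeff n * (sqrt 279 * (real n)^2))"
      using eventually_ge_at_top[of 2] by eventually_elim (simp add: norm_char_Zn_Ln_le)
    show "(\<lambda>n. \<bar>t\<bar> * (1 / (2 * sqrt (real n)) + rem_coeff n * (sqrt 279 * (real n)^2))) \<longlonglongrightarrow> 0"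
      using tendsto_mult_right_zero[OF rem_bound_tendsto_0] by simp
  qed
  from tendsto_add[OF this char_Ln_tendsto[of t]] show ?thesis
    by simp
qed

end

theorem theorem4:
  fixes M :: "'a measure" and X :: "nat \<Rightarrow> 'a \<Rightarrow> real" and l :: real
  assumes "prob_space M"
    and "l > 0"
    and "prob_space.indep_vars M (\<lambda>i. borel) X UNIV"
    and "\<And>i. distributed M lborel (X i) (exponential_density l)"
  shows "weak_conv_m (\<lambda>n. distr M borel (\<lambda>\<omega>. sqrt (real n) * I_stat (\<lambda>i. X i \<omega>) n))
           (density lborel (normal_density 0 (sqrt (9 * (11 / 3780)))))"
proof -
  interpret iid_exponential M l X
    using assms by (intro iid_exponential.intro exponential_law.intro iid_exponential_axioms.intro)
  have Zn: "(\<lambda>\<omega>. sqrt (real n) * I_stat (\<lambda>i. X i \<omega>) n) = Zn n" for n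
    by (simp add: Zn_def fun_eq_iff)
  have sd: "sqrt (9 * (11 / 3780)) = limit_sd" and "0 < limit_sd"
    by (simp_all add: limit_sd_def)
  show ?thesis
    unfolding Zn sd
  proof (rule levy_continuity)
    show "real_distribution (distr M borel (Zn n))" for n
      by simp
    show "real_distribution (density lborel (normal_density 0 limit_sd))"
      using prob_space_normal_density[OF \<open>0 < limit_sd\<close>]
      by (auto simp: real_distribution_def real_distribution_axioms_def)
    show "(\<lambda>n. char (distr M borel (Zn n)) t) \<longlonglongrightarrow> char (density lborel (normal_density 0 limit_sd)) t" for t
      using char_Zn_tendsto[of t] char_normal_density_scale[OF \<open>0 < limit_sd\<close>, of t] by simp
  qed
qed

end
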